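(* Let $f:\mathbb{R}^2\to\mathbb{R}^2$ be a Topologically Anosov homeomorphism and $z_0\in\mathrm{Fix}(f)$. If there exists $x\neq z_0$ with $\alpha(x)=\omega(x)=\{z_0\}$, then there exist $y_0\neq z_0$ and $z\in\mathbb{R}^2$ such that $y_0\in\omega(z)$.
   Context: A homeomorphism $f:\mathbb{R}^2\to\mathbb{R}^2$ is Topologically Anosov (TA) if: (i) there is a continuous strictly positive $\epsilon:\mathbb{R}^2\to\mathbb{R}$ such that for all $x\neq y$ there is $k\in\mathbb{Z}$ with $\|f^k(x)-f^k(y)\|>\epsilon(f^k(x))$; and (ii) for every continuous strictly positive $\epsilon$ there is a continuous strictly positive $\delta$ such that every $\delta$-pseudo-orbit is $\epsilon$-shadowed by an orbit. A $\delta$-pseudo-orbit is a sequence $(x_n)_{n\in\mathbb{Z}}$ with $\|f(x_n)-x_{n+1}\|<\delta(f(x_n))$; it is $\epsilon$-shadowed by the orbit of $x$ if $\|x_n-f^n(x)\|<\epsilon(x_n)$ for all $n$. $\alpha(x),\omega(x)$ are the $\alpha$- and $\omega$-limit sets. *)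

theory Defs
  imports "HOL-Analysis.Analysis"
begin

type_synonym R2 = "real ^ 2"

definition iter_int :: "(R2 \<Rightarrow> R2) \<Rightarrow> int \<Rightarrow> R2 \<Rightarrow> R2" where
  "iter_int f k = (if 0 \<le> k then f ^^ nat k else inv f ^^ nat (- k))"

definition pos_cont_fun :: "(R2 \<Rightarrow> real) \<Rightarrow> bool" where
  "pos_cont_fun e \<longleftrightarrow> continuous_on UNIV e \<and> (\<forall>x. 0 < e x)"

definition pseudo_orbit :: "(R2 \<Rightarrow> R2) \<Rightarrow> (R2 \<Rightarrow> real) \<Rightarrow> (int \<Rightarrow> R2) \<Rightarrow> bool" where
  "pseudo_orbit f \<delta> xs \<longleftrightarrow> (\<forall>n. norm (f (xs n) - xs (n + 1)) < \<delta> (f (xs n)))"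

definition shadows :: "(R2 \<Rightarrow> R2) \<Rightarrow> (R2 \<Rightarrow> real) \<Rightarrow> (int \<Rightarrow> R2) \<Rightarrow> R2 \<Rightarrow> bool" where
  "shadows f \<epsilon> xs x \<longleftrightarrow> (\<forall>n. norm (xs n - iter_int f n x) < \<epsilon> (xs n))"

definition topologically_anosov :: "(R2 \<Rightarrow> R2) \<Rightarrow> bool" where
  "topologically_anosov f \<longleftrightarrow>
     (\<exists>g. homeomorphism UNIV UNIV f g) \<and>
     (\<exists>\<epsilon>. pos_cont_fun \<epsilon> \<and>
        (\<forall>x y. x \<noteq> y \<longrightarrow>
           (\<exists>k::int. norm (iter_int f k x - iter_int f k y) > \<epsilon> (iter_int f k x)))) \<and>
     (\<forall>\<epsilon>. pos_cont_fun \<epsilon> \<longrightarrow>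
        (\<exists>\<delta>. pos_cont_fun \<delta> \<and>
           (\<forall>xs. pseudo_orbit f \<delta> xs \<longrightarrow> (\<exists>x. shadows f \<epsilon> xs x))))"

definition omega_limit :: "(R2 \<Rightarrow> R2) \<Rightarrow> R2 \<Rightarrow> R2 set" where
  "omega_limit f x = {y. \<forall>e>0. \<forall>N::nat. \<exists>n\<ge>N. dist ((f ^^ n) x) y < e}"

definition alpha_limit :: "(R2 \<Rightarrow> R2) \<Rightarrow> R2 \<Rightarrow> R2 set" where
  "alpha_limit f x = omega_limit (inv f) x"

end

theory Submission
  imports Defs
begin

(* Close the homoclinic loop of x: follow the orbit of x forward until it is close to z0, jump
   to a backward iterate of x that is also close to z0, and repeat.  This periodic pseudo-orbit
   is shadowed, with precision d = dist x z0 / 2, by a true orbit that returns to the ball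
   cball x d once per period; by compactness its omega-limit set meets that ball, which does
   not contain z0. *)

lemma iter_int_succ:
  assumes "bij f"
  shows "iter_int f (k + 1) y = f (iter_int f k y)"
proof (cases "0 \<le> k")
  case True
  then have "nat (k + 1) = Suc (nat k)" by simp
  then show ?thesis using True by (simp add: iter_int_def)
next
  case False
  then have m: "nat (- k) = Suc (nat (- (k + 1)))" by simp
  have "f (inv f ((inv f ^^ m) y)) = (inv f ^^ m) y" for m
    using assms by (simp add: bij_is_surj surj_f_inv_f)
  moreover have "0 \<le> k + 1 \<Longrightarrow> nat (- (k + 1)) = 0" using False by simp
  ultimately show ?thesis using False m by (auto simp: iter_int_def)
qed

lemma mod_plus_one_int:
  fixes n p :: int
  assumes "0 < p"
  shows "(n + 1) mod p = (if n mod p = p - 1 then 0 else n mod p + 1)"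
proof -
  have "(n + 1) mod p = (n mod p + 1) mod p" by (simp add: mod_add_left_eq)
  moreover have "0 \<le> n mod p" "n mod p < p" using assms by auto
  ultimately show ?thesis by (auto simp: mod_pos_pos_trivial)
qed

(* The orbit segment from inv f ^^ M x to f ^^ N x, repeated with period N + M + 1; its only
   non-orbit step is the jump from f ^^ Suc N x back to inv f ^^ M x. *)
lemma pseudo_orbit_loop:
  assumes "bij f" and "pos_cont_fun \<delta>"
    and jump: "norm (f ((f ^^ N) x) - (inv f ^^ M) x) < \<delta> (f ((f ^^ N) x))"
  shows "pseudo_orbit f \<delta> (\<lambda>n. iter_int f (n mod (int N + int M + 1) - int M) x)"
    (is "pseudo_orbit f \<delta> ?xs")
  unfolding pseudo_orbit_def
proof
  fix n
  define p where "p = int N + int M + 1"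
  have p: "0 < p" by (simp add: p_def)
  show "norm (f (?xs n) - ?xs (n + 1)) < \<delta> (f (?xs n))"
  proof (cases "n mod p = p - 1")
    case True
    then have "?xs n = (f ^^ N) x" and "?xs (n + 1) = (inv f ^^ M) x"
      using mod_plus_one_int[OF p, of n] by (simp_all add: p_def iter_int_def)
    then show ?thesis using jump by simp
  next
    case False
    then have "?xs (n + 1) = f (?xs n)"
      using mod_plus_one_int[OF p, of n] iter_int_succ[OF \<open>bij f\<close>, of "n mod p - int M" x]
      by (simp add: p_def algebra_simps)
    then show ?thesis using \<open>pos_cont_fun \<delta>\<close> by (simp add: pos_cont_fun_def)
  qed
qed

lemma pos_cont_fun_small_jumps_near:
  assumes "pos_cont_fun \<delta>"
  obtains \<rho> where "0 < \<rho>"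
    and "\<And>a b. dist a z0 < \<rho> \<Longrightarrow> dist b z0 < \<rho> \<Longrightarrow> norm (a - b) < \<delta> a"
proof -
  have pos: "0 < \<delta> z0" and "isCont \<delta> z0"
    using assms by (auto simp: pos_cont_fun_def continuous_on_eq_continuous_at)
  then obtain r where r: "0 < r" "\<And>a. dist a z0 < r \<Longrightarrow> dist (\<delta> a) (\<delta> z0) < \<delta> z0 / 2"
    unfolding continuous_at_eps_delta by (metis half_gt_zero)
  show ?thesis
  proof
    show "0 < min r (\<delta> z0 / 4)" using r pos by simp
    fix a b assume a: "dist a z0 < min r (\<delta> z0 / 4)" and b: "dist b z0 < min r (\<delta> z0 / 4)"
    have "norm (a - b) \<le> dist a z0 + dist b z0"
      by (metis dist_commute dist_norm dist_triangle)
    also have "\<dots> < \<delta> z0 / 2" using a b by simp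
    also have "\<dots> < \<delta> a" using r(2)[of a] a unfolding dist_real_def by linarith
    finally show "norm (a - b) < \<delta> a" .
  qed
qed

lemma homoclinic_loop_shadowed:
  assumes "topologically_anosov f"
    and "z0 \<in> alpha_limit f x" and "z0 \<in> omega_limit f x" and "0 < d"
  obtains z P where "0 < P" and "\<And>k. dist ((f ^^ (k * P)) z) x < d"
proof -
  obtain g where "homeomorphism UNIV UNIV f g"
    using assms(1) unfolding topologically_anosov_def by auto
  then have bij: "bij f"
    by (intro o_bij[of g f]) (auto simp: homeomorphism_def fun_eq_iff)
  have "pos_cont_fun (\<lambda>_. d)" using \<open>0 < d\<close> by (simp add: pos_cont_fun_def)
  then obtain \<delta> where \<delta>: "pos_cont_fun \<delta>"
    and shadow: "\<And>xs. pseudo_orbit f \<delta> xs \<Longrightarrow> \<exists>z. shadows f (\<lambda>_. d) xs z"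
    using assms(1) unfolding topologically_anosov_def by blast
  obtain \<rho> where "0 < \<rho>"
    and near: "\<And>a b. dist a z0 < \<rho> \<Longrightarrow> dist b z0 < \<rho> \<Longrightarrow> norm (a - b) < \<delta> a"
    using pos_cont_fun_small_jumps_near[OF \<delta>] by blast
  obtain n where "1 \<le> n" "dist ((f ^^ n) x) z0 < \<rho>"
    using assms(3) \<open>0 < \<rho>\<close> unfolding omega_limit_def by blast
  then obtain N where N: "dist ((f ^^ Suc N) x) z0 < \<rho>"
    by (metis Suc_diff_1 less_le_trans zero_less_one)
  obtain M where M: "dist ((inv f ^^ M) x) z0 < \<rho>"
    using assms(2) \<open>0 < \<rho>\<close> unfolding alpha_limit_def omega_limit_def by blast
  define xs where "xs n = iter_int f (n mod (int N + int M + 1) - int M) x" for n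
  have "pseudo_orbit f \<delta> xs"
    unfolding xs_def using pseudo_orbit_loop[OF bij \<delta>] near[OF N M] by simp
  then obtain z where z: "shadows f (\<lambda>_. d) xs z"
    using shadow by blast
  show ?thesis
  proof
    show "0 < N + M + 1" by simp
    fix k
    define n where "n = int k * (int N + int M + 1) + int M"
    have "xs n = x"
      by (simp add: xs_def n_def iter_int_def)
    moreover have "iter_int f n z = (f ^^ (k * (N + M + 1))) ((f ^^ M) z)"
      by (simp add: n_def iter_int_def nat_add_distrib nat_mult_distrib funpow_add)
    ultimately show "dist ((f ^^ (k * (N + M + 1))) ((f ^^ M) z)) x < d"
      using z unfolding shadows_def by (metis dist_norm dist_commute)
  qed
qed

lemma omega_limit_meets_compact:
  assumes "compact K" and returns: "\<And>k. (f ^^ t k) z \<in> K" and unbounded: "\<And>k. k \<le> t k"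
  obtains y where "y \<in> K" and "y \<in> omega_limit f z"
proof -
  have "\<forall>k. (f ^^ t k) z \<in> K" using returns by blast
  then obtain y \<phi> where "y \<in> K" "strict_mono \<phi>" and lim: "((\<lambda>k. (f ^^ t k) z) \<circ> \<phi>) \<longlonglongrightarrow> y"
    by (rule seq_compactE[OF compact_imp_seq_compact[OF \<open>compact K\<close>]])
  have "y \<in> omega_limit f z"
    unfolding omega_limit_def
  proof (intro CollectI allI impI)
    fix e :: real and N :: nat
    assume "0 < e"
    then obtain J where J: "\<And>j. J \<le> j \<Longrightarrow> dist ((f ^^ t (\<phi> j)) z) y < e"
      using lim unfolding lim_sequentially comp_def by blast
    have "N \<le> t (\<phi> (max J N))"
      using seq_suble[OF \<open>strict_mono \<phi>\<close>, of "max J N"] unbounded[of "\<phi> (max J N)"] by linarith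
    then show "\<exists>n\<ge>N. dist ((f ^^ n) z) y < e" using J[of "max J N"] by auto
  qed
  with \<open>y \<in> K\<close> show ?thesis using that by blast
qed

theorem mainTheorem12:
  fixes f :: "R2 \<Rightarrow> R2" and z0 :: R2
  assumes "topologically_anosov f"
    and "f z0 = z0"
    and "\<exists>x. x \<noteq> z0 \<and> alpha_limit f x = {z0} \<and> omega_limit f x = {z0}"
  shows "\<exists>y0 z. y0 \<noteq> z0 \<and> y0 \<in> omega_limit f z"
proof -
  obtain x where "x \<noteq> z0" and x: "z0 \<in> alpha_limit f x" "z0 \<in> omega_limit f x"
    using assms(3) by auto
  define d where "d = dist x z0 / 2"
  have "0 < d" using \<open>x \<noteq> z0\<close> by (simp add: d_def)
  obtain P z where "0 < P" and "\<And>k. dist ((f ^^ (k * P)) z) x < d"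
    using homoclinic_loop_shadowed[OF assms(1) x \<open>0 < d\<close>] by blast
  then have "(f ^^ (k * P)) z \<in> cball x d" and "k \<le> k * P" for k
    by (simp_all add: dist_commute less_imp_le)
  then obtain y where "y \<in> cball x d" and "y \<in> omega_limit f z"
    using omega_limit_meets_compact[OF compact_cball, where t = "\<lambda>k. k * P"] by blast
  moreover have "y \<noteq> z0" using \<open>y \<in> cball x d\<close> \<open>0 < d\<close> by (auto simp: d_def)
  ultimately show ?thesis by blast
qed

end
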